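(* Assume (A.3). Then there is a finite constant $C_\chi>0$, independent of $h$ and $\omega$, such that for all sufficiently small $h$, \[ M(y^\star_h(0),y^\star_h(T))+\frac{r^2(y^\star_h,u^\star_h)}{2\omega}\le M(y^\star(0),y^\star(T))+C_\chi\Big(h^{\eta\lambda}+\frac{h^{2\eta\lambda}+h^\ell}{\omega}\Big). \]
   Context: Optimal control problem (OCP). Let $T>0$. The candidate space $\mathcal{X}$ consists of pairs $(y,u)$ with $y:[0,T]\to\mathbb{R}^{n_y}$, $y\in L^\infty$, $\dot y\in L^2$ (weak derivative), and $u\in L^\infty([0,T];\mathbb{R}^{n_u})$, with norm $\|(y,u)\|_{\mathcal{X}}=\|\dot y\|_{L^2}+\operatorname{ess\,sup}_t\|(y(t),u(t))\|_\infty$. Given $M:\mathbb{R}^{n_y}\times\mathbb{R}^{n_y}\to\mathbb{R}$, $b:\mathbb{R}^{n_y}\times\mathbb{R}^{n_y}\to\mathbb{R}^{n_b}$, $f_1:\mathbb{R}^{n_y}\times\mathbb{R}^{n_u}\times[0,T]\to\mathbb{R}^{n_y}$, $f_2:\mathbb{R}^{n_y}\times\mathbb{R}^{n_u}\times[0,T]\to\mathbb{R}^{n_c}$ and bounds $y_L\le y_R$, $u_L\le u_R$, the OCP is: minimize $M(y(0),y(T))$ over $\mathcal{X}$ subject to $b(y(0),y(T))=0$, $\dot y(t)=f_1(y(t),u(t),t)$, $f_2(y(t),u(t),t)=0$ a.e., $y_L\le y\le y_R$, $u_L\le u\le u_R$ everywhere. $f(\dot y,y,u,t)=(f_1(y,u,t)-\dot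 y,f_2(y,u,t))$, $r(y,u)=(\int_0^T\|f(\dot y(t),y(t),u(t),t)\|_2^2dt+\|b(y(0),y(T))\|_2^2)^{1/2}$. $(y^\star,u^\star)$ is a fixed local minimizer. Discretization. Mesh $0=t_1<\dots<t_{N+1}=T$, $I_i=[t_i,t_{i+1}]$, $h=\max_i(t_{i+1}-t_i)$, degree $p\in\mathbb{N}$; $\mathcal{X}_{h,p}$: $y_h$ continuous and polynomial of degree $\le p$ on each $I_i$, $u_h$ polynomial of degree $\le p-1$ on each $I_i$. Quadrature $\mathcal{Q}_{h,q}$: $q$ pairs $(t,\alpha)$, $\alpha>0$, per mesh interval; $Q_{h,q}(y_h,u_h)=\sum\alpha\|f(\dot y_h(t),y_h(t),u_h(t),t)\|_2^2$. $\mathcal{T}_{h,m}$: union over $i$ of the images on $I_i$ of $\tau_k=-\cos(k\pi/m)$, $k=0,\dots,m$. For $\omega>0$, problem $(P_h)$: minimize $M(y_h(0),y_h(T))+\frac1{2\omega}(Q_{h,q}(y_h,u_h)+\|b(y_h(0),y_h(T))\|_2^2)$ over $\mathcal{X}_{h,p}$ subject to the bounds at all $t\in\mathcal{T}_{h,m}$; $\mathcal{B}_{h,p}$ is its feasible set. Prerequisites. (Approximability) there are $h_0,\eta,C_\eta>0$ such that for all $h\le h_0$ there is $(y_h,u_h)\in\mathcal{B}_{h,p}$ with $\|(y^\star,u^\star)-(y_h,u_h)\|_{\mathcal{X}}\le C_\eta h^\eta$; a fixed such pair is denoted $(\hat y_h,\hat u_h)$. $(y_L,u_L),(y_R,u_R)\in\mathcal{X}_{h,p}$.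 (Quadrature order) there are $\ell,C_\ell,h_0>0$ with $|\int_0^T\|f(\dot y_h,y_h,u_h,t)\|_2^2dt-Q_{h,q}(y_h,u_h)|\le C_\ell h^\ell$ for all $h\le h_0$ and $(y_h,u_h)\in\mathcal{X}_{h,p}$. $(y^\star_h,u^\star_h)$ is a local minimizer of $(P_h)$ with $(P_h)$-objective at most that of $(\hat y_h,\hat u_h)$. (A.3): there are $\lambda\in(0,1]$, $C_\lambda>0$, $\epsilon>0$ with $|M(y^\star(0),y^\star(T))-M(a,a')|\le C_\lambda\|(y^\star(0)-a,y^\star(T)-a')\|_2^\lambda$ and $\|b(y^\star(0),y^\star(T))-b(a,a')\|_2\le C_\lambda\|(y^\star(0)-a,y^\star(T)-a')\|_2^\lambda$ whenever $\|(y^\star(0)-a,y^\star(T)-a')\|_2\le\epsilon$, and for each $t$, $\|(f_1(y^\star(t),u^\star(t),t)-f_1(v,w,t),f_2(y^\star(t),u^\star(t),t)-f_2(v,w,t))\|_2\le C_\lambda\|(y^\star(t)-v,u^\star(t)-w)\|_2^\lambda$ whenever $\|(y^\star(t)-v,u^\star(t)-w)\|_2\le\epsilon$. *)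

theory Defs
  imports "HOL-Analysis.Analysis" "HOL-Computational_Algebra.Polynomial"
begin

definition pvec :: "real poly ^ 'n \<Rightarrow> real \<Rightarrow> real ^ 'n" where
  "pvec P t = (\<chi> j. poly (P $ j) t)"

text \<open>Mesh 0 = tm 0 < tm 1 < ... < tm N = T (0-based indexing); interval i is {tm i..tm (Suc i)}.\<close>
definition is_mesh :: "real \<Rightarrow> nat \<Rightarrow> (nat \<Rightarrow> real) \<Rightarrow> bool" where
  "is_mesh T N tm \<longleftrightarrow> 1 \<le> N \<and> tm 0 = 0 \<and> tm N = T \<and> (\<forall>i<N. tm i < tm (Suc i))"

definition mesh_size :: "nat \<Rightarrow> (nat \<Rightarrow> real) \<Rightarrow> real" where
  "mesh_size N tm = Max ((\<lambda>i. tm (Suc i) - tm i) ` {..<N})"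

definition in_Xhp :: "real \<Rightarrow> nat \<Rightarrow> (nat \<Rightarrow> real) \<Rightarrow> nat \<Rightarrow>
    (real \<Rightarrow> real ^ 'ny) \<Rightarrow> (real \<Rightarrow> real ^ 'nu) \<Rightarrow> bool" where
  "in_Xhp T N tm p y u \<longleftrightarrow>
     continuous_on {0..T} y \<and>
     (\<forall>i<N. \<exists>P :: real poly ^ 'ny. (\<forall>j. degree (P $ j) \<le> p) \<and>
              (\<forall>t\<in>{tm i..tm (Suc i)}. y t = pvec P t)) \<and>
     (\<forall>i<N. \<exists>P :: real poly ^ 'nu. (\<forall>j. degree (P $ j) \<le> p - 1) \<and>
              (\<forall>t\<in>{tm i<..<tm (Suc i)}. u t = pvec P t))"

text \<open>Value of the polynomial piece of u on interval i (well defined at the interval endpoints).\<close>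
definition upiece :: "(nat \<Rightarrow> real) \<Rightarrow> (real \<Rightarrow> real ^ 'n) \<Rightarrow> nat \<Rightarrow> real \<Rightarrow> real ^ 'n" where
  "upiece tm u i t = pvec (SOME P. \<forall>s\<in>{tm i<..<tm (Suc i)}. u s = pvec P s) t"

definition ypiece_deriv :: "(nat \<Rightarrow> real) \<Rightarrow> (real \<Rightarrow> real ^ 'n) \<Rightarrow> nat \<Rightarrow> real \<Rightarrow> real ^ 'n" where
  "ypiece_deriv tm y i t = vector_derivative y (at t within {tm i..tm (Suc i)})"

text \<open>f(ydot,y,u,t) = (f1(y,u,t) - ydot, f2(y,u,t)); its Euclidean norm is the product norm.\<close>
definition fres :: "(real ^ 'ny \<Rightarrow> real ^ 'nu \<Rightarrow> real \<Rightarrow> real ^ 'ny) \<Rightarrow>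
    (real ^ 'ny \<Rightarrow> real ^ 'nu \<Rightarrow> real \<Rightarrow> real ^ 'nc) \<Rightarrow>
    real ^ 'ny \<Rightarrow> real ^ 'ny \<Rightarrow> real ^ 'nu \<Rightarrow> real \<Rightarrow> (real ^ 'ny) \<times> (real ^ 'nc)" where
  "fres f1 f2 yd y u t = (f1 y u t - yd, f2 y u t)"

text \<open>Quadrature: on interval i the nodes qt i j and weights qa i j, j < q.\<close>
definition Qh :: "nat \<Rightarrow> (nat \<Rightarrow> real) \<Rightarrow> nat \<Rightarrow> (nat \<Rightarrow> nat \<Rightarrow> real) \<Rightarrow> (nat \<Rightarrow> nat \<Rightarrow> real) \<Rightarrow>
    (real ^ 'ny \<Rightarrow> real ^ 'nu \<Rightarrow> real \<Rightarrow> real ^ 'ny) \<Rightarrow>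
    (real ^ 'ny \<Rightarrow> real ^ 'nu \<Rightarrow> real \<Rightarrow> real ^ 'nc) \<Rightarrow>
    (real \<Rightarrow> real ^ 'ny) \<Rightarrow> (real \<Rightarrow> real ^ 'nu) \<Rightarrow> real" where
  "Qh N tm q qt qa f1 f2 y u =
     (\<Sum>i<N. \<Sum>j<q. qa i j *
        (norm (fres f1 f2 (ypiece_deriv tm y i (qt i j)) (y (qt i j)) (upiece tm u i (qt i j)) (qt i j)))\<^sup>2)"

text \<open>Chebyshev-Lobatto point k (k = 0..m) mapped to interval i.\<close>
definition cheb_node :: "(nat \<Rightarrow> real) \<Rightarrow> nat \<Rightarrow> nat \<Rightarrow> nat \<Rightarrow> real" where
  "cheb_node tm m i k = tm i + (1 - cos (real k * pi / real m)) / 2 * (tm (Suc i) - tm i)"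

definition in_Bhp :: "real \<Rightarrow> nat \<Rightarrow> (nat \<Rightarrow> real) \<Rightarrow> nat \<Rightarrow> nat \<Rightarrow>
    (real \<Rightarrow> real ^ 'ny) \<Rightarrow> (real \<Rightarrow> real ^ 'ny) \<Rightarrow> (real \<Rightarrow> real ^ 'nu) \<Rightarrow> (real \<Rightarrow> real ^ 'nu) \<Rightarrow>
    (real \<Rightarrow> real ^ 'ny) \<Rightarrow> (real \<Rightarrow> real ^ 'nu) \<Rightarrow> bool" where
  "in_Bhp T N tm p m yL yR uL uR y u \<longleftrightarrow>
     in_Xhp T N tm p y u \<and>
     (\<forall>i<N. \<forall>k\<le>m. yL (cheb_node tm m i k) \<le> y (cheb_node tm m i k) \<and>
                    y (cheb_node tm m i k) \<le> yR (cheb_node tm m i k) \<and>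
                    upiece tm uL i (cheb_node tm m i k) \<le> upiece tm u i (cheb_node tm m i k) \<and>
                    upiece tm u i (cheb_node tm m i k) \<le> upiece tm uR i (cheb_node tm m i k))"

definition Jh :: "real \<Rightarrow> nat \<Rightarrow> (nat \<Rightarrow> real) \<Rightarrow> nat \<Rightarrow> (nat \<Rightarrow> nat \<Rightarrow> real) \<Rightarrow> (nat \<Rightarrow> nat \<Rightarrow> real) \<Rightarrow>
    real \<Rightarrow> (real ^ 'ny \<Rightarrow> real ^ 'ny \<Rightarrow> real) \<Rightarrow> (real ^ 'ny \<Rightarrow> real ^ 'ny \<Rightarrow> real ^ 'nb) \<Rightarrow>
    (real ^ 'ny \<Rightarrow> real ^ 'nu \<Rightarrow> real \<Rightarrow> real ^ 'ny) \<Rightarrow>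
    (real ^ 'ny \<Rightarrow> real ^ 'nu \<Rightarrow> real \<Rightarrow> real ^ 'nc) \<Rightarrow>
    (real \<Rightarrow> real ^ 'ny) \<Rightarrow> (real \<Rightarrow> real ^ 'nu) \<Rightarrow> real" where
  "Jh T N tm q qt qa \<omega> M b f1 f2 y u =
     M (y 0) (y T) + (Qh N tm q qt qa f1 f2 y u + (norm (b (y 0) (y T)))\<^sup>2) / (2 * \<omega>)"

text \<open>g is the weak derivative of y on [0,T] and lies in L^2; y is taken to be the
  absolutely continuous representative.\<close>
definition is_wderiv :: "real \<Rightarrow> (real \<Rightarrow> real ^ 'n) \<Rightarrow> (real \<Rightarrow> real ^ 'n) \<Rightarrow> bool" where
  "is_wderiv T y g \<longleftrightarrow> g \<in> borel_measurable (lebesgue_on {0..T}) \<and>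
     (\<lambda>t. (norm (g t))\<^sup>2) integrable_on {0..T} \<and>
     (\<forall>t\<in>{0..T}. (g has_integral (y t - y 0)) {0..t})"

definition wderiv :: "real \<Rightarrow> (real \<Rightarrow> real ^ 'n) \<Rightarrow> real \<Rightarrow> real ^ 'n" where
  "wderiv T y = (SOME g. is_wderiv T y g)"

definition Linf :: "real \<Rightarrow> (real \<Rightarrow> 'a::real_normed_vector) \<Rightarrow> bool" where
  "Linf T g \<longleftrightarrow> g \<in> borel_measurable (lebesgue_on {0..T}) \<and>
     (\<exists>c. AE t in lebesgue_on {0..T}. norm (g t) \<le> c)"

definition in_X :: "real \<Rightarrow> (real \<Rightarrow> real ^ 'ny) \<Rightarrow> (real \<Rightarrow> real ^ 'nu) \<Rightarrow> bool" where
  "in_X T y u \<longleftrightarrow> Linf T y \<and> (\<exists>g. is_wderiv T y g) \<and> Linf T u"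

definition ess_sup_on :: "real \<Rightarrow> (real \<Rightarrow> real) \<Rightarrow> real" where
  "ess_sup_on T g = Inf {c. AE t in lebesgue_on {0..T}. g t \<le> c}"

definition Xnorm :: "real \<Rightarrow> (real \<Rightarrow> real ^ 'ny) \<Rightarrow> (real \<Rightarrow> real ^ 'nu) \<Rightarrow> real" where
  "Xnorm T y u = sqrt (integral {0..T} (\<lambda>t. (norm (wderiv T y t))\<^sup>2))
                 + ess_sup_on T (\<lambda>t. infnorm (y t, u t))"

definition Xdist :: "real \<Rightarrow> (real \<Rightarrow> real ^ 'ny) \<Rightarrow> (real \<Rightarrow> real ^ 'nu) \<Rightarrow>
    (real \<Rightarrow> real ^ 'ny) \<Rightarrow> (real \<Rightarrow> real ^ 'nu) \<Rightarrow> real" where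
  "Xdist T y u y' u' = Xnorm T (\<lambda>t. y t - y' t) (\<lambda>t. u t - u' t)"

definition rsq :: "real \<Rightarrow> (real ^ 'ny \<Rightarrow> real ^ 'nu \<Rightarrow> real \<Rightarrow> real ^ 'ny) \<Rightarrow>
    (real ^ 'ny \<Rightarrow> real ^ 'nu \<Rightarrow> real \<Rightarrow> real ^ 'nc) \<Rightarrow> (real ^ 'ny \<Rightarrow> real ^ 'ny \<Rightarrow> real ^ 'nb) \<Rightarrow>
    (real \<Rightarrow> real ^ 'ny) \<Rightarrow> (real \<Rightarrow> real ^ 'nu) \<Rightarrow> real" where
  "rsq T f1 f2 b y u =
     integral {0..T} (\<lambda>t. (norm (fres f1 f2 (wderiv T y t) (y t) (u t) t))\<^sup>2)
     + (norm (b (y 0) (y T)))\<^sup>2"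

definition ocp_feasible :: "real \<Rightarrow> (real ^ 'ny \<Rightarrow> real ^ 'ny \<Rightarrow> real ^ 'nb) \<Rightarrow>
    (real ^ 'ny \<Rightarrow> real ^ 'nu \<Rightarrow> real \<Rightarrow> real ^ 'ny) \<Rightarrow>
    (real ^ 'ny \<Rightarrow> real ^ 'nu \<Rightarrow> real \<Rightarrow> real ^ 'nc) \<Rightarrow>
    (real \<Rightarrow> real ^ 'ny) \<Rightarrow> (real \<Rightarrow> real ^ 'ny) \<Rightarrow> (real \<Rightarrow> real ^ 'nu) \<Rightarrow> (real \<Rightarrow> real ^ 'nu) \<Rightarrow>
    (real \<Rightarrow> real ^ 'ny) \<Rightarrow> (real \<Rightarrow> real ^ 'nu) \<Rightarrow> bool" where
  "ocp_feasible T b f1 f2 yL yR uL uR y u \<longleftrightarrow>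
     in_X T y u \<and> b (y 0) (y T) = 0 \<and>
     (\<exists>g. is_wderiv T y g \<and>
        (AE t in lebesgue_on {0..T}. g t = f1 (y t) (u t) t \<and> f2 (y t) (u t) t = 0)) \<and>
     (\<forall>t\<in>{0..T}. yL t \<le> y t \<and> y t \<le> yR t \<and> uL t \<le> u t \<and> u t \<le> uR t)"

definition ocp_local_min :: "real \<Rightarrow> (real ^ 'ny \<Rightarrow> real ^ 'ny \<Rightarrow> real) \<Rightarrow>
    (real ^ 'ny \<Rightarrow> real ^ 'ny \<Rightarrow> real ^ 'nb) \<Rightarrow>
    (real ^ 'ny \<Rightarrow> real ^ 'nu \<Rightarrow> real \<Rightarrow> real ^ 'ny) \<Rightarrow>
    (real ^ 'ny \<Rightarrow> real ^ 'nu \<Rightarrow> real \<Rightarrow> real ^ 'nc) \<Rightarrow>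
    (real \<Rightarrow> real ^ 'ny) \<Rightarrow> (real \<Rightarrow> real ^ 'ny) \<Rightarrow> (real \<Rightarrow> real ^ 'nu) \<Rightarrow> (real \<Rightarrow> real ^ 'nu) \<Rightarrow>
    (real \<Rightarrow> real ^ 'ny) \<Rightarrow> (real \<Rightarrow> real ^ 'nu) \<Rightarrow> bool" where
  "ocp_local_min T M b f1 f2 yL yR uL uR y u \<longleftrightarrow>
     ocp_feasible T b f1 f2 yL yR uL uR y u \<and>
     (\<exists>\<epsilon>>0. \<forall>y' u'. ocp_feasible T b f1 f2 yL yR uL uR y' u' \<and> Xdist T y' u' y u < \<epsilon>
                \<longrightarrow> M (y 0) (y T) \<le> M (y' 0) (y' T))"

definition Ph_local_min :: "real \<Rightarrow> nat \<Rightarrow> (nat \<Rightarrow> real) \<Rightarrow> nat \<Rightarrow> nat \<Rightarrow> nat \<Rightarrow>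
    (nat \<Rightarrow> nat \<Rightarrow> real) \<Rightarrow> (nat \<Rightarrow> nat \<Rightarrow> real) \<Rightarrow> real \<Rightarrow>
    (real ^ 'ny \<Rightarrow> real ^ 'ny \<Rightarrow> real) \<Rightarrow> (real ^ 'ny \<Rightarrow> real ^ 'ny \<Rightarrow> real ^ 'nb) \<Rightarrow>
    (real ^ 'ny \<Rightarrow> real ^ 'nu \<Rightarrow> real \<Rightarrow> real ^ 'ny) \<Rightarrow>
    (real ^ 'ny \<Rightarrow> real ^ 'nu \<Rightarrow> real \<Rightarrow> real ^ 'nc) \<Rightarrow>
    (real \<Rightarrow> real ^ 'ny) \<Rightarrow> (real \<Rightarrow> real ^ 'ny) \<Rightarrow> (real \<Rightarrow> real ^ 'nu) \<Rightarrow> (real \<Rightarrow> real ^ 'nu) \<Rightarrow>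
    (real \<Rightarrow> real ^ 'ny) \<Rightarrow> (real \<Rightarrow> real ^ 'nu) \<Rightarrow> bool" where
  "Ph_local_min T N tm p m q qt qa \<omega> M b f1 f2 yL yR uL uR y u \<longleftrightarrow>
     in_Bhp T N tm p m yL yR uL uR y u \<and>
     (\<exists>\<epsilon>>0. \<forall>y' u'. in_Bhp T N tm p m yL yR uL uR y' u' \<and> Xdist T y' u' y u < \<epsilon>
                \<longrightarrow> Jh T N tm q qt qa \<omega> M b f1 f2 y u \<le> Jh T N tm q qt qa \<omega> M b f1 f2 y' u')"

end

theory Submission
  imports Defs
begin

(*
  The comparison point is the approximant (yhat, uhat) itself.  The discrete minimiser (y, u)
  has (P_h)-objective at most that of (yhat, uhat), and on X_{h,p} the quadrature Q_h differs
  from the integral of |f|^2 by at most C_l h^l; hence the penalty objective M + r^2/(2 omega)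
  at (y, u) exceeds its value at (yhat, uhat) by at most C_l h^l / omega.

  At (yhat, uhat) everything is controlled by delta = Xdist (ystar, ustar) (yhat, uhat), which
  is at most C_eta h^eta.  The ess-sup part of delta bounds the state and control errors almost
  everywhere and, by continuity of weak antiderivatives, the state error at t = 0 and t = T.
  The Hoelder condition (A.3) then moves M and b by O(delta^lam).  Since ystar' = f1 (ystar, ustar)
  and f2 (ystar, ustar) = 0 a.e., the residual f(yhat', yhat, uhat) is (ystar' - yhat', 0) minus
  the increment of (f1, f2), so its squared integral is O(delta^2 + delta^(2 lam)).  Finally
  delta^2 <= C_eta^2 h^(2 eta lam) because h <= 1 and lam <= 1.
*)

section \<open>Null sets and essential suprema on intervals\<close>

lemma AE_lebesgue_on_negligibleI:
  fixes S :: "'a::euclidean_space set"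
  assumes "S \<in> sets lebesgue" "negligible Z" "\<And>t. t \<in> S \<Longrightarrow> t \<notin> Z \<Longrightarrow> P t"
  shows "AE t in lebesgue_on S. P t"
proof -
  have "AE t in lebesgue. t \<in> S \<longrightarrow> P t"
    using assms(2,3) by (intro AE_I'[of Z]) (auto simp: negligible_iff_null_sets)
  then show ?thesis using AE_restrict_space_iff[of S lebesgue P] assms(1) by simp
qed

lemma AE_lebesgue_on_negligibleE:
  fixes S :: "'a::euclidean_space set"
  assumes "AE t in lebesgue_on S. P t" "S \<in> sets lebesgue"
  obtains Z where "negligible Z" "\<And>t. t \<in> S \<Longrightarrow> t \<notin> Z \<Longrightarrow> P t"
proof -
  have "AE t in lebesgue. t \<in> S \<longrightarrow> P t"
    using AE_restrict_space_iff[of S lebesgue P] assms by simp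
  then obtain Z where "Z \<in> null_sets lebesgue" "\<And>t. t \<in> space lebesgue - Z \<Longrightarrow> t \<in> S \<longrightarrow> P t"
    by (rule AE_E3) blast
  then show ?thesis using that by (simp add: negligible_iff_null_sets)
qed

lemma not_AE_False_interval:
  fixes a b :: real
  assumes "a < b"
  shows "\<not> (AE t in lebesgue_on {a..b}. False)"
proof
  assume "AE t in lebesgue_on {a..b}. False"
  then obtain Z where "negligible Z" "\<And>t. t \<in> {a..b} \<Longrightarrow> t \<notin> Z \<Longrightarrow> False"
    by (elim AE_lebesgue_on_negligibleE) auto
  then have "negligible {a..b}" by (meson negligible_subset subsetI)
  then show False using assms by (simp add: negligible_convex_interior)
qed

lemma open_subset_closure_diff_negligible:
  fixes U :: "'a::euclidean_space set"
  assumes "open U" "negligible Z"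
  shows "U \<subseteq> closure (U - Z)"
proof
  fix x assume "x \<in> U"
  show "x \<in> closure (U - Z)"
  proof (unfold closure_approachable, intro allI impI)
    fix e :: real assume "0 < e"
    then have "\<not> negligible (U \<inter> ball x e)"
      using \<open>x \<in> U\<close> assms(1) by (intro open_not_negligible) auto
    then have "\<not> U \<inter> ball x e \<subseteq> Z" using assms(2) negligible_subset by blast
    then show "\<exists>y\<in>U - Z. dist y x < e" by (auto simp: dist_commute)
  qed
qed

lemma continuous_on_AE_le_imp_le:
  fixes f :: "real \<Rightarrow> real"
  assumes "a < b" "continuous_on {a..b} f" "AE t in lebesgue_on {a..b}. f t \<le> c" "t \<in> {a..b}"
  shows "f t \<le> c"
proof -
  obtain Z where Z: "negligible Z" and le: "\<And>s. s \<in> {a..b} \<Longrightarrow> s \<notin> Z \<Longrightarrow> f s \<le> c"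
    using assms(3) by (elim AE_lebesgue_on_negligibleE) auto
  have "{a..b} = closure {a<..<b}" using assms(1) by simp
  also have "\<dots> \<subseteq> closure ({a<..<b} - Z)"
    using open_subset_closure_diff_negligible[OF _ Z, of "{a<..<b}"]
    by (metis closure_closure closure_mono open_greaterThanLessThan)
  finally have cl: "closure ({a<..<b} - Z) = {a..b}"
    using assms(1) closure_mono[of "{a<..<b} - Z" "{a<..<b}"] by auto
  show ?thesis
    by (rule continuous_le_on_closure[of "{a<..<b} - Z"]) (use assms cl le in auto)
qed

lemma ess_sup_on_bounds:
  fixes g :: "real \<Rightarrow> real"
  assumes T: "0 < T" and nonneg: "\<And>t. 0 \<le> g t" and bdd: "AE t in lebesgue_on {0..T}. g t \<le> c"
  shows "0 \<le> ess_sup_on T g" "AE t in lebesgue_on {0..T}. g t \<le> ess_sup_on T g"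
proof -
  define S where "S = {c. AE t in lebesgue_on {0..T}. g t \<le> c}"
  have "c \<in> S" using bdd unfolding S_def by simp
  then have ne: "S \<noteq> {}" by blast
  have "0 \<le> c'" if "c' \<in> S" for c'
  proof (rule ccontr)
    assume "\<not> 0 \<le> c'"
    with that nonneg have "AE t in lebesgue_on {0..T}. False"
      unfolding S_def by (auto elim!: eventually_mono intro: order_trans)
    with not_AE_False_interval[OF T] show False by blast
  qed
  then show "0 \<le> ess_sup_on T g"
    using ne unfolding ess_sup_on_def S_def[symmetric] by (intro cInf_greatest)
  have "AE t in lebesgue_on {0..T}. g t \<le> Inf S + inverse (real (Suc n))" for n
  proof -
    obtain c' where "c' \<in> S" "c' < Inf S + inverse (real (Suc n))"
      using cInf_lessD[OF ne, of "Inf S + inverse (real (Suc n))"] by auto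
    then show ?thesis unfolding S_def by (auto elim!: eventually_mono)
  qed
  then have "AE t in lebesgue_on {0..T}. \<forall>n. g t \<le> Inf S + inverse (real (Suc n))"
    by (simp add: AE_all_countable)
  then have "AE t in lebesgue_on {0..T}. g t \<le> Inf S"
  proof (rule eventually_mono)
    fix t assume le: "\<forall>n. g t \<le> Inf S + inverse (real (Suc n))"
    show "g t \<le> Inf S"
    proof (rule field_le_epsilon)
      fix e :: real assume "0 < e"
      then obtain n where "inverse (real (Suc n)) < e" using reals_Archimedean by blast
      then show "g t \<le> Inf S + e" using le[rule_format, of n] by linarith
    qed
  qed
  then show "AE t in lebesgue_on {0..T}. g t \<le> ess_sup_on T g"
    unfolding ess_sup_on_def S_def by simp
qed

lemma integral_le_AE_nonneg:
  fixes F G :: "real \<Rightarrow> real"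
  assumes le: "AE t in lebesgue_on {a..b}. F t \<le> G t" and G: "G integrable_on {a..b}"
    and G0: "\<And>t. 0 \<le> G t"
  shows "integral {a..b} F \<le> integral {a..b} G"
proof (cases "F integrable_on {a..b}")
  case True
  obtain Z where Z: "negligible Z" and FG: "\<And>t. t \<in> {a..b} \<Longrightarrow> t \<notin> Z \<Longrightarrow> F t \<le> G t"
    using le by (elim AE_lebesgue_on_negligibleE) auto
  define F' where "F' t = (if t \<in> Z then 0 else F t)" for t
  have "integral {a..b} F = integral {a..b} F'"
    by (rule integral_spike[OF Z]) (simp add: F'_def)
  also have "\<dots> \<le> integral {a..b} G"
  proof (rule integral_le)
    show "F' integrable_on {a..b}" by (rule integrable_spike[OF True Z]) (simp add: F'_def)
  qed (use G FG G0 in \<open>auto simp: F'_def\<close>)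
  finally show ?thesis .
next
  case False
  then show ?thesis using integral_nonneg[OF G G0] by (simp add: not_integrable_integral)
qed

section \<open>Piecewise polynomials on a mesh\<close>

lemma is_mesh_length_pos:
  assumes "is_mesh T N tm"
  shows "0 < T"
proof -
  have "tm 0 < tm N"
  proof (rule lift_Suc_mono_less_ivl[of "{..<N}"])
    show "\<And>n. n \<in> {..<N} \<Longrightarrow> tm n < tm (Suc n)"
      using assms unfolding is_mesh_def by simp
  qed (use assms in \<open>auto simp: is_mesh_def\<close>)
  then show ?thesis using assms unfolding is_mesh_def by simp
qed

lemma mesh_size_pos:
  assumes "is_mesh T N tm"
  shows "0 < mesh_size N tm"
proof -
  have "0 < N" using assms unfolding is_mesh_def by simp
  then have "0 < tm (Suc 0) - tm 0" using assms unfolding is_mesh_def by auto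
  also have "\<dots> \<le> mesh_size N tm"
    unfolding mesh_size_def using \<open>0 < N\<close> by (intro Max_ge) auto
  finally show ?thesis .
qed

lemma is_mesh_cover:
  assumes "is_mesh T N tm" "t \<in> {0..T}"
  obtains i where "i < N" "t \<in> {tm i..tm (Suc i)}"
proof -
  define A where "A = {i. i < N \<and> tm i \<le> t}"
  have "finite A" "0 \<in> A" using assms unfolding A_def is_mesh_def by auto
  define i where "i = Max A"
  have "i \<in> A" using \<open>finite A\<close> \<open>0 \<in> A\<close> unfolding i_def by (intro Max_in) auto
  have "t \<le> tm (Suc i)"
  proof (cases "Suc i < N")
    case True
    have "Suc i \<notin> A" using Max_ge[OF \<open>finite A\<close>] unfolding i_def by fastforce
    then show ?thesis using True unfolding A_def by auto
  next
    case False
    then have "Suc i = N" using \<open>i \<in> A\<close> unfolding A_def by auto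
    then show ?thesis using assms unfolding is_mesh_def by auto
  qed
  then show ?thesis using that \<open>i \<in> A\<close> unfolding A_def by auto
qed

lemma is_mesh_cover_open:
  assumes "is_mesh T N tm" "t \<in> {0..T}" "t \<notin> tm ` {..N}"
  obtains i where "i < N" "t \<in> {tm i<..<tm (Suc i)}"
proof -
  obtain i where "i < N" "t \<in> {tm i..tm (Suc i)}" using is_mesh_cover[OF assms(1,2)] .
  moreover have "t \<noteq> tm i" "t \<noteq> tm (Suc i)" using assms(3) \<open>i < N\<close> by auto
  ultimately show ?thesis using that by auto
qed

lemma continuous_on_pvec: "continuous_on S (pvec P)"
  unfolding pvec_def by (auto intro!: continuous_intros)

lemma bounded_pvec_image: "bounded (pvec P ` {a..b})"
  by (intro compact_imp_bounded compact_continuous_image continuous_on_pvec) auto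

lemma has_vector_derivative_pvec:
  "(pvec P has_vector_derivative pvec (\<chi> j. pderiv (P $ j)) x) (at x)"
proof -
  have "(poly (P $ j) has_derivative (\<lambda>h. h * poly (pderiv (P $ j)) x)) (at x)" for j
    using poly_DERIV[of "P $ j" x] by (simp add: has_field_derivative_def mult_commute_abs)
  then show ?thesis
    unfolding has_vector_derivative_def
    by (subst has_derivative_componentwise_within) (simp add: Basis_vec_def inner_axis pvec_def)
qed

lemma in_Xhp_pieces:
  assumes "in_Xhp T N tm p y u"
  obtains PP QQ where "\<And>i t. i < N \<Longrightarrow> t \<in> {tm i..tm (Suc i)} \<Longrightarrow> y t = pvec (PP i) t"
    and "\<And>i t. i < N \<Longrightarrow> t \<in> {tm i<..<tm (Suc i)} \<Longrightarrow> u t = pvec (QQ i) t"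
proof -
  from assms have "\<forall>i<N. \<exists>P. \<forall>t\<in>{tm i..tm (Suc i)}. y t = pvec P t"
    and "\<forall>i<N. \<exists>P. \<forall>t\<in>{tm i<..<tm (Suc i)}. u t = pvec P t"
    unfolding in_Xhp_def by blast+
  then show ?thesis using that by metis
qed

lemma in_Xhp_AE_bounded:
  assumes mesh: "is_mesh T N tm" and X: "in_Xhp T N tm p y u"
  obtains c where "AE t in lebesgue_on {0..T}. norm (y t, u t) \<le> c"
proof -
  obtain QQ where QQ: "\<And>i t. i < N \<Longrightarrow> t \<in> {tm i<..<tm (Suc i)} \<Longrightarrow> u t = pvec (QQ i) t"
    using in_Xhp_pieces[OF X] by metis
  have "bounded (y ` {0..T})"
    using X unfolding in_Xhp_def by (intro compact_imp_bounded compact_continuous_image) auto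
  then obtain cy where cy: "\<And>t. t \<in> {0..T} \<Longrightarrow> norm (y t) \<le> cy"
    unfolding bounded_iff by blast
  have "u ` ({0..T} - tm ` {..N}) \<subseteq> (\<Union>i<N. pvec (QQ i) ` {tm i..tm (Suc i)})"
  proof (rule image_subsetI)
    fix t assume "t \<in> {0..T} - tm ` {..N}"
    then obtain i where "i < N" "t \<in> {tm i<..<tm (Suc i)}"
      using is_mesh_cover_open[OF mesh, of t] by blast
    then show "u t \<in> (\<Union>i<N. pvec (QQ i) ` {tm i..tm (Suc i)})" using QQ by force
  qed
  moreover have "bounded (\<Union>i<N. pvec (QQ i) ` {tm i..tm (Suc i)})"
    by (intro bounded_UN ballI bounded_pvec_image) auto
  ultimately have "bounded (u ` ({0..T} - tm ` {..N}))" by (rule bounded_subset[rotated])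
  then obtain cu where cu: "\<And>t. t \<in> {0..T} - tm ` {..N} \<Longrightarrow> norm (u t) \<le> cu"
    by (metis bounded_iff imageI)
  have "AE t in lebesgue_on {0..T}. norm (y t, u t) \<le> cy + cu"
  proof (rule AE_lebesgue_on_negligibleI[of _ "tm ` {..N}"])
    show "negligible (tm ` {..N})" by (intro negligible_finite) auto
    show "norm (y t, u t) \<le> cy + cu" if "t \<in> {0..T}" "t \<notin> tm ` {..N}" for t
      using norm_Pair_le[of "y t" "u t"] cy[of t] cu[of t] that by auto
  qed auto
  then show ?thesis using that by blast
qed

lemma is_wderiv_bounded_derivative:
  fixes y g :: "real \<Rightarrow> real ^ 'n"
  assumes T: "0 \<le> T" and cont: "continuous_on {0..T} y" and S: "finite S"
    and deriv: "\<And>t. t \<in> {0<..<T} - S \<Longrightarrow> (y has_vector_derivative g t) (at t)"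
    and bdd: "\<And>t. t \<in> {0..T} \<Longrightarrow> norm (g t) \<le> B"
  shows "is_wderiv T y g"
proof -
  have FTC: "(g has_integral (y t - y 0)) {0..t}" if "t \<in> {0..T}" for t
  proof (rule fundamental_theorem_of_calculus_interior_strong[OF S])
    show "continuous_on {0..t} y" using that by (intro continuous_on_subset[OF cont]) auto
  qed (use that deriv in auto)
  then have "g integrable_on {0..T}" using T unfolding integrable_on_def by auto
  then have meas: "g \<in> borel_measurable (lebesgue_on {0..T})"
    by (rule integrable_imp_measurable)
  have "(\<lambda>t. (norm (g t))\<^sup>2) integrable_on {0..T}"
  proof (rule measurable_bounded_by_integrable_imp_integrable[where g="\<lambda>_. B\<^sup>2"])
    show "(\<lambda>t. (norm (g t))\<^sup>2) \<in> borel_measurable (lebesgue_on {0..T})"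
      using meas by (intro borel_measurable_power measurable_compose[OF meas borel_measurable_norm])
    show "norm ((norm (g t))\<^sup>2) \<le> B\<^sup>2" if "t \<in> {0..T}" for t
      using bdd[OF that] by (simp add: power_mono)
    show "(\<lambda>_. B\<^sup>2) integrable_on {0..T}" by (metis integrable_const cbox_interval)
  qed simp
  then show ?thesis unfolding is_wderiv_def using meas FTC by blast
qed

lemma in_Xhp_has_wderiv:
  assumes mesh: "is_mesh T N tm" and X: "in_Xhp T N tm p y u"
  obtains g where "is_wderiv T y g"
proof -
  obtain PP where PP: "\<And>i t. i < N \<Longrightarrow> t \<in> {tm i..tm (Suc i)} \<Longrightarrow> y t = pvec (PP i) t"
    using in_Xhp_pieces[OF X] by metis
  define DP where "DP i = pvec (\<chi> j. pderiv (PP i $ j))" for i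
  define S where "S = tm ` {..N}"
  define g where "g t = (if t \<in> S then 0 else vector_derivative y (at t))" for t
  have "bounded (\<Union>i<N. DP i ` {tm i..tm (Suc i)})"
    unfolding DP_def by (intro bounded_UN ballI bounded_pvec_image) auto
  then obtain B where B: "\<And>i t. i < N \<Longrightarrow> t \<in> {tm i..tm (Suc i)} \<Longrightarrow> norm (DP i t) \<le> B"
    unfolding bounded_iff by blast
  have dy: "(y has_vector_derivative g t) (at t) \<and> norm (g t) \<le> B" if t: "t \<in> {0..T} - S" for t
  proof -
    obtain i where i: "i < N" "t \<in> {tm i<..<tm (Suc i)}"
      using t is_mesh_cover_open[OF mesh, of t] unfolding S_def by blast
    have "(y has_vector_derivative DP i t) (at t)"
      unfolding DP_def
      by (rule has_vector_derivative_transform_within_open[OF has_vector_derivative_pvec, of "{tm i<..<tm (Suc i)}"])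
        (use i PP in auto)
    moreover then have "g t = DP i t" using t unfolding g_def by (simp add: vector_derivative_at)
    ultimately show ?thesis using B[of i t] i by auto
  qed
  have "0 < N" "tm 0 \<le> tm (Suc 0)" using mesh unfolding is_mesh_def by auto
  then have "0 \<le> B" using B[of 0 "tm 0"] by (meson atLeastAtMost_iff norm_ge_zero order_refl order_trans)
  have "is_wderiv T y g"
  proof (rule is_wderiv_bounded_derivative[where S=S and B=B])
    show "0 \<le> T" using is_mesh_length_pos[OF mesh] by simp
    show "continuous_on {0..T} y" using X unfolding in_Xhp_def by blast
    show "finite S" unfolding S_def by simp
    show "(y has_vector_derivative g t) (at t)" if "t \<in> {0<..<T} - S" for t
      using dy that by auto
    show "norm (g t) \<le> B" if "t \<in> {0..T}" for t
      using dy[of t] that \<open>0 \<le> B\<close> by (cases "t \<in> S") (auto simp: g_def)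
  qed
  then show ?thesis by (rule that)
qed

section \<open>Weak derivatives\<close>

lemma square_add_le: "(a + b)\<^sup>2 \<le> 2 * a\<^sup>2 + 2 * (b::real)\<^sup>2"
proof -
  have "0 \<le> (a - b)\<^sup>2" by simp
  then show ?thesis by (simp add: power2_sum power2_diff)
qed

lemma is_wderiv_continuous:
  assumes "is_wderiv T y g"
  shows "continuous_on {0..T} y"
proof (cases "0 \<le> T")
  case True
  have int: "(g has_integral (y t - y 0)) {0..t}" if "t \<in> {0..T}" for t
    using assms that unfolding is_wderiv_def by blast
  then have "g integrable_on {0..T}" using True unfolding integrable_on_def by auto
  then have "continuous_on {0..T} (\<lambda>t. y 0 + integral {0..t} g)"
    by (intro continuous_intros indefinite_integral_continuous_1)
  then show ?thesis
    by (rule continuous_on_eq) (simp add: integral_unique[OF int])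
qed simp

lemma is_wderiv_diff:
  assumes g1: "is_wderiv T y1 g1" and g2: "is_wderiv T y2 g2"
  shows "is_wderiv T (\<lambda>t. y1 t - y2 t) (\<lambda>t. g1 t - g2 t)"
proof -
  have meas: "(\<lambda>t. g1 t - g2 t) \<in> borel_measurable (lebesgue_on {0..T})"
    using assms unfolding is_wderiv_def by (intro borel_measurable_diff) auto
  have "(\<lambda>t. (norm (g1 t - g2 t))\<^sup>2) integrable_on {0..T}"
  proof (rule measurable_bounded_by_integrable_imp_integrable
      [where g="\<lambda>t. 2 * (norm (g1 t))\<^sup>2 + 2 * (norm (g2 t))\<^sup>2"])
    show "(\<lambda>t. (norm (g1 t - g2 t))\<^sup>2) \<in> borel_measurable (lebesgue_on {0..T})"
      by (intro borel_measurable_power measurable_compose[OF meas borel_measurable_norm])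
    show "(\<lambda>t. 2 * (norm (g1 t))\<^sup>2 + 2 * (norm (g2 t))\<^sup>2) integrable_on {0..T}"
      using assms unfolding is_wderiv_def by (intro integrable_add integrable_on_mult_right) auto
    show "norm ((norm (g1 t - g2 t))\<^sup>2) \<le> 2 * (norm (g1 t))\<^sup>2 + 2 * (norm (g2 t))\<^sup>2" for t
      using order_trans[OF power_mono[OF norm_triangle_ineq4[of "g1 t" "g2 t"] norm_ge_zero]
          square_add_le[of "norm (g1 t)" "norm (g2 t)"]] by simp
  qed simp
  moreover have "((\<lambda>t. g1 t - g2 t) has_integral (y1 t - y2 t) - (y1 0 - y2 0)) {0..t}"
    if "t \<in> {0..T}" for t
    using has_integral_diff[of g1 "y1 t - y1 0" "{0..t}" g2 "y2 t - y2 0"] assms that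
    unfolding is_wderiv_def by (simp add: algebra_simps)
  ultimately show ?thesis using meas unfolding is_wderiv_def by blast
qed

text \<open>By Lebesgue's differentiation theorem, the difference quotients of the indefinite
  integral converge to the integrand almost everywhere.\<close>
lemma AE_eq_0_if_indefinite_integral_eq_0:
  fixes h :: "real \<Rightarrow> 'a::euclidean_space"
  assumes T: "0 < T" and int0: "\<And>t. t \<in> {0..T} \<Longrightarrow> (h has_integral 0) {0..t}"
  shows "AE t in lebesgue_on {0..T}. h t = 0"
proof -
  define hh where "hh x = (if x \<in> {0..T} then h x else 0)" for x
  have "h integrable_on {0..T}" using int0[of T] T unfolding integrable_on_def by auto
  then have "hh integrable_on UNIV" unfolding hh_def by (simp only: integrable_restrict_UNIV)
  then have hcb: "hh integrable_on cbox a b" for a b by (rule integrable_on_subcbox) simp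
  have hh0: "integral {0..t} hh = 0" if "t \<in> {0..T}" for t
  proof -
    have "integral {0..t} hh = integral {0..t} h"
      using that by (intro integral_cong) (auto simp: hh_def)
    then show ?thesis using integral_unique[OF int0[OF that]] by simp
  qed
  obtain Z where Z: "negligible Z"
    and diff: "\<And>x e. \<lbrakk>x \<notin> Z; 0 < e\<rbrakk> \<Longrightarrow> \<exists>d>0. \<forall>r. 0 < r \<and> r < d \<longrightarrow>
                 norm (integral (cbox x (x + r *\<^sub>R One)) hh /\<^sub>R r ^ DIM(real) - hh x) < e"
    using integrable_ccontinuous_explicit[of hh, OF hcb] by blast
  have zero: "hh x = 0" if x: "0 < x" "x < T" "x \<notin> Z" for x
  proof (rule ccontr)
    assume "hh x \<noteq> 0"
    then obtain d where "0 < d"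
      and d: "\<And>r. 0 < r \<Longrightarrow> r < d \<Longrightarrow> norm (integral {x..x + r} hh /\<^sub>R r - hh x) < norm (hh x)"
      using diff[OF x(3), of "norm (hh x)"] by auto
    define r where "r = min (d / 2) ((T - x) / 2)"
    have "r \<le> (T - x) / 2" unfolding r_def by (rule min.cobounded2)
    then have r: "0 < r" "r < d" "x + r \<le> T" using \<open>0 < d\<close> x unfolding r_def by auto
    have "integral {0..x} hh + integral {x..x + r} hh = integral {0..x + r} hh"
      using x r hcb[of 0 "x + r"] by (intro Henstock_Kurzweil_Integration.integral_combine) auto
    then have "integral {x..x + r} hh = 0" using hh0[of x] hh0[of "x + r"] x r by simp
    then show False using d[OF r(1,2)] by simp
  qed
  show ?thesis
  proof (rule AE_lebesgue_on_negligibleI[of _ "Z \<union> {0, T}"])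
    show "negligible (Z \<union> {0, T})" using Z by simp
    show "h t = 0" if "t \<in> {0..T}" "t \<notin> Z \<union> {0, T}" for t
      using zero[of t] that by (simp add: hh_def)
  qed simp
qed

lemma is_wderiv_AE_unique:
  assumes T: "0 < T" and g1: "is_wderiv T y g1" and g2: "is_wderiv T y g2"
  shows "AE t in lebesgue_on {0..T}. g1 t = g2 t"
proof -
  have "AE t in lebesgue_on {0..T}. g1 t - g2 t = 0"
  proof (rule AE_eq_0_if_indefinite_integral_eq_0[OF T])
    show "((\<lambda>t. g1 t - g2 t) has_integral 0) {0..t}" if "t \<in> {0..T}" for t
      using has_integral_diff[of g1 "y t - y 0" "{0..t}" g2 "y t - y 0"] g1 g2 that
      unfolding is_wderiv_def by simp
  qed
  then show ?thesis by (rule eventually_mono) simp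
qed

lemma is_wderiv_wderiv:
  assumes "is_wderiv T y g"
  shows "is_wderiv T y (wderiv T y)"
  unfolding wderiv_def using assms by (rule someI[of "is_wderiv T y"])

lemma AE_wderiv_eq:
  assumes "0 < T" "is_wderiv T y g"
  shows "AE t in lebesgue_on {0..T}. wderiv T y t = g t"
  using is_wderiv_AE_unique[OF assms(1) is_wderiv_wderiv[OF assms(2)] assms(2)] .

section \<open>Consistency of the approximant\<close>

lemma Xnorm_le_bounds:
  fixes z :: "real \<Rightarrow> real ^ 'ny" and w :: "real \<Rightarrow> real ^ 'nu"
  assumes T: "0 < T" and z: "is_wderiv T z g"
    and bdd: "AE t in lebesgue_on {0..T}. norm (z t, w t) \<le> c"
    and le: "Xnorm T z w \<le> \<delta>"
  shows "integral {0..T} (\<lambda>t. (norm (wderiv T z t))\<^sup>2) \<le> \<delta>\<^sup>2"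
    and "AE t in lebesgue_on {0..T}. norm (z t, w t) \<le> sqrt DIM((real ^ 'ny) \<times> (real ^ 'nu)) * \<delta>"
    and "\<forall>t\<in>{0..T}. norm (z t) \<le> sqrt DIM((real ^ 'ny) \<times> (real ^ 'nu)) * \<delta>"
proof -
  let ?D = "sqrt DIM((real ^ 'ny) \<times> (real ^ 'nu))"
  define I where "I = integral {0..T} (\<lambda>t. (norm (wderiv T z t))\<^sup>2)"
  define S where "S = ess_sup_on T (\<lambda>t. infnorm (z t, w t))"
  have AE_c: "AE t in lebesgue_on {0..T}. infnorm (z t, w t) \<le> c"
    using bdd by (rule eventually_mono) (rule order_trans[OF infnorm_le_norm])
  have "0 \<le> S" and AE_S: "AE t in lebesgue_on {0..T}. infnorm (z t, w t) \<le> S"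
    unfolding S_def by (rule ess_sup_on_bounds[OF T infnorm_pos_le AE_c])+
  have "0 \<le> I"
    using is_wderiv_wderiv[OF z] unfolding I_def is_wderiv_def by (intro integral_nonneg) auto
  have sum: "sqrt I + S \<le> \<delta>" using le unfolding Xnorm_def I_def S_def .
  then have "sqrt I \<le> \<delta>" using \<open>0 \<le> S\<close> by linarith
  then show "I \<le> \<delta>\<^sup>2" unfolding I_def by (rule sqrt_le_D)
  have "S \<le> \<delta>" using sum real_sqrt_ge_zero[OF \<open>0 \<le> I\<close>] by linarith
  have AE_D: "AE t in lebesgue_on {0..T}. norm (z t, w t) \<le> ?D * \<delta>"
    using AE_S
  proof (rule eventually_mono)
    fix t assume "infnorm (z t, w t) \<le> S"
    then have "?D * infnorm (z t, w t) \<le> ?D * \<delta>" using \<open>S \<le> \<delta>\<close> by (intro mult_left_mono) auto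
    then show "norm (z t, w t) \<le> ?D * \<delta>" using norm_le_infnorm[of "(z t, w t)"] by simp
  qed
  then show "AE t in lebesgue_on {0..T}. norm (z t, w t) \<le> ?D * \<delta>" .
  show "\<forall>t\<in>{0..T}. norm (z t) \<le> ?D * \<delta>"
  proof
    fix t assume "t \<in> {0..T}"
    moreover have "continuous_on {0..T} (\<lambda>t. norm (z t))"
      using is_wderiv_continuous[OF z] by (intro continuous_on_norm)
    moreover have "AE t in lebesgue_on {0..T}. norm (z t) \<le> ?D * \<delta>"
      using AE_D by (rule eventually_mono) (rule order_trans[OF norm_fst_le])
    ultimately show "norm (z t) \<le> ?D * \<delta>" by (intro continuous_on_AE_le_imp_le[OF T])
  qed
qed

lemma approximant_error_bounds:
  fixes ys yh :: "real \<Rightarrow> real ^ 'ny" and us uh :: "real \<Rightarrow> real ^ 'nu"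
  assumes T: "0 < T" and X: "in_X T ys us"
    and mesh: "is_mesh T N tm" and Xh: "in_Xhp T N tm p yh uh"
    and dist: "Xdist T ys us yh uh \<le> \<delta>"
  shows "integral {0..T} (\<lambda>t. (norm (wderiv T (\<lambda>t. ys t - yh t) t))\<^sup>2) \<le> \<delta>\<^sup>2"
    and "AE t in lebesgue_on {0..T}.
           norm (ys t - yh t, us t - uh t) \<le> sqrt DIM((real ^ 'ny) \<times> (real ^ 'nu)) * \<delta>"
    and "\<forall>t\<in>{0..T}. norm (ys t - yh t) \<le> sqrt DIM((real ^ 'ny) \<times> (real ^ 'nu)) * \<delta>"
proof -
  obtain gs where gs: "is_wderiv T ys gs" using X unfolding in_X_def by blast
  obtain gh where gh: "is_wderiv T yh gh" using in_Xhp_has_wderiv[OF mesh Xh] .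
  obtain cy cu where "AE t in lebesgue_on {0..T}. norm (ys t) \<le> cy"
    and "AE t in lebesgue_on {0..T}. norm (us t) \<le> cu"
    using X unfolding in_X_def Linf_def by blast
  then have "AE t in lebesgue_on {0..T}. norm (ys t, us t) \<le> cy + cu"
    by eventually_elim (rule order_trans[OF norm_Pair_le add_mono])
  moreover obtain ch where "AE t in lebesgue_on {0..T}. norm (yh t, uh t) \<le> ch"
    using in_Xhp_AE_bounded[OF mesh Xh] .
  ultimately have "AE t in lebesgue_on {0..T}.
      norm (ys t - yh t, us t - uh t) \<le> cy + cu + ch"
  proof eventually_elim
    case (elim t)
    have "norm (ys t - yh t, us t - uh t) \<le> norm (ys t, us t) + norm (yh t, uh t)"
      using norm_triangle_ineq4[of "(ys t, us t)" "(yh t, uh t)"] by simp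
    with elim show ?case by linarith
  qed
  from Xnorm_le_bounds[OF T is_wderiv_diff[OF gs gh] this dist[unfolded Xdist_def]]
  show "integral {0..T} (\<lambda>t. (norm (wderiv T (\<lambda>t. ys t - yh t) t))\<^sup>2) \<le> \<delta>\<^sup>2"
    and "AE t in lebesgue_on {0..T}.
           norm (ys t - yh t, us t - uh t) \<le> sqrt DIM((real ^ 'ny) \<times> (real ^ 'nu)) * \<delta>"
    and "\<forall>t\<in>{0..T}. norm (ys t - yh t) \<le> sqrt DIM((real ^ 'ny) \<times> (real ^ 'nu)) * \<delta>"
    by blast+
qed

lemma fres_perturbation:
  assumes "g = f1 y u t" "f2 y u t = 0"
  shows "fres f1 f2 gh yh uh t
           = (g - gh, 0) - (f1 y u t - f1 yh uh t, f2 y u t - f2 yh uh t)"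
  using assms unfolding fres_def by (simp add: prod_eq_iff)

lemma residual_integral_le:
  fixes ys yh :: "real \<Rightarrow> real ^ 'ny" and us uh :: "real \<Rightarrow> real ^ 'nu"
    and f1 :: "real ^ 'ny \<Rightarrow> real ^ 'nu \<Rightarrow> real \<Rightarrow> real ^ 'ny"
    and f2 :: "real ^ 'ny \<Rightarrow> real ^ 'nu \<Rightarrow> real \<Rightarrow> real ^ 'nc"
  assumes T: "0 < T" and gs: "is_wderiv T ys gs"
    and dyn: "AE t in lebesgue_on {0..T}. gs t = f1 (ys t) (us t) t \<and> f2 (ys t) (us t) t = 0"
    and gh: "is_wderiv T yh gh"
    and F: "AE t in lebesgue_on {0..T}.
              norm (f1 (ys t) (us t) t - f1 (yh t) (uh t) t, f2 (ys t) (us t) t - f2 (yh t) (uh t) t) \<le> K"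
  shows "integral {0..T} (\<lambda>t. (norm (fres f1 f2 (wderiv T yh t) (yh t) (uh t) t))\<^sup>2)
           \<le> 2 * T * K\<^sup>2 + 2 * integral {0..T} (\<lambda>t. (norm (wderiv T (\<lambda>t. ys t - yh t) t))\<^sup>2)"
proof -
  define e where "e t = ys t - yh t" for t
  define ge where "ge = wderiv T e"
  have ge: "is_wderiv T e ge"
    unfolding ge_def e_def by (rule is_wderiv_wderiv[OF is_wderiv_diff[OF gs gh]])
  have "is_wderiv T (\<lambda>t. ys t - e t) (\<lambda>t. gs t - ge t)" by (rule is_wderiv_diff[OF gs ge])
  then have "AE t in lebesgue_on {0..T}. wderiv T yh t = gs t - ge t"
    using AE_wderiv_eq[OF T] unfolding e_def by simp
  with dyn F have "AE t in lebesgue_on {0..T}.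
      (norm (fres f1 f2 (wderiv T yh t) (yh t) (uh t) t))\<^sup>2 \<le> 2 * K\<^sup>2 + 2 * (norm (ge t))\<^sup>2"
  proof eventually_elim
    case (elim t)
    define X where "X = (f1 (ys t) (us t) t - f1 (yh t) (uh t) t, f2 (ys t) (us t) t - f2 (yh t) (uh t) t)"
    have "fres f1 f2 (wderiv T yh t) (yh t) (uh t) t = (ge t, 0) - X"
      using elim fres_perturbation[of "gs t" f1 "ys t" "us t" t f2] unfolding X_def by simp
    then have "norm (fres f1 f2 (wderiv T yh t) (yh t) (uh t) t) \<le> norm (ge t, 0 :: real ^ 'nc) + norm X"
      by (metis norm_triangle_ineq4)
    also have "\<dots> \<le> norm (ge t) + K" using elim unfolding X_def by (simp add: norm_Pair)
    finally have "norm (fres f1 f2 (wderiv T yh t) (yh t) (uh t) t) \<le> norm (ge t) + K" .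
    from power_mono[OF this norm_ge_zero, of 2] square_add_le[of "norm (ge t)" K]
    show ?case by simp
  qed
  moreover have sq: "(\<lambda>t. (norm (ge t))\<^sup>2) integrable_on {0..T}" using ge unfolding is_wderiv_def by blast
  then have "(\<lambda>t. 2 * K\<^sup>2 + 2 * (norm (ge t))\<^sup>2) integrable_on {0..T}"
    by (intro integrable_add integrable_on_mult_right integrable_const_ivl)
  ultimately have "integral {0..T} (\<lambda>t. (norm (fres f1 f2 (wderiv T yh t) (yh t) (uh t) t))\<^sup>2)
      \<le> integral {0..T} (\<lambda>t. 2 * K\<^sup>2 + 2 * (norm (ge t))\<^sup>2)"
    by (intro integral_le_AE_nonneg) auto
  also have "\<dots> = integral {0..T} (\<lambda>t. 2 * K\<^sup>2) + integral {0..T} (\<lambda>t. 2 * (norm (ge t))\<^sup>2)"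
    using sq by (intro integral_add integrable_on_mult_right) auto
  also have "\<dots> = 2 * T * K\<^sup>2 + 2 * integral {0..T} (\<lambda>t. (norm (ge t))\<^sup>2)"
    using T by simp
  finally show ?thesis unfolding ge_def e_def .
qed

text \<open>The factor sqrt DIM converts the sup-norm part of Xnorm into the Euclidean norms of (A.3);
  the factor 2 accounts for the two endpoints entering M and b.\<close>
lemma approximant_penalty_bounds:
  fixes M :: "real ^ 'ny \<Rightarrow> real ^ 'ny \<Rightarrow> real"
    and b :: "real ^ 'ny \<Rightarrow> real ^ 'ny \<Rightarrow> real ^ 'nb"
    and f1 :: "real ^ 'ny \<Rightarrow> real ^ 'nu \<Rightarrow> real \<Rightarrow> real ^ 'ny"
    and f2 :: "real ^ 'ny \<Rightarrow> real ^ 'nu \<Rightarrow> real \<Rightarrow> real ^ 'nc"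
    and ys yh :: "real \<Rightarrow> real ^ 'ny" and us uh :: "real \<Rightarrow> real ^ 'nu"
  assumes T: "0 < T" and feasible: "ocp_feasible T b f1 f2 yL yR uL uR ys us"
    and mesh: "is_mesh T N tm" and Xh: "in_Xhp T N tm p yh uh"
    and dist: "Xdist T ys us yh uh \<le> \<delta>"
    and \<rho>: "2 * sqrt DIM((real ^ 'ny) \<times> (real ^ 'nu)) * \<delta> \<le> \<rho>" "\<rho> \<le> \<epsilon>"
    and lam: "0 < lam" and Clam: "0 \<le> Clam"
    and boundary: "\<forall>a a'. norm (ys 0 - a, ys T - a') \<le> \<epsilon> \<longrightarrow>
          \<bar>M (ys 0) (ys T) - M a a'\<bar> \<le> Clam * norm (ys 0 - a, ys T - a') powr lam \<and>
          norm (b (ys 0) (ys T) - b a a') \<le> Clam * norm (ys 0 - a, ys T - a') powr lam"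
    and dynamics: "\<forall>t\<in>{0..T}. \<forall>v w. norm (ys t - v, us t - w) \<le> \<epsilon> \<longrightarrow>
          norm (f1 (ys t) (us t) t - f1 v w t, f2 (ys t) (us t) t - f2 v w t)
            \<le> Clam * norm (ys t - v, us t - w) powr lam"
  shows "M (yh 0) (yh T) \<le> M (ys 0) (ys T) + Clam * \<rho> powr lam"
    and "rsq T f1 f2 b yh uh \<le> (2 * T + 1) * (Clam * \<rho> powr lam)\<^sup>2 + 2 * \<delta>\<^sup>2"
proof -
  let ?D = "sqrt DIM((real ^ 'ny) \<times> (real ^ 'nu))"
  let ?K = "Clam * \<rho> powr lam"
  obtain gs where X: "in_X T ys us" and b0: "b (ys 0) (ys T) = 0" and gs: "is_wderiv T ys gs"
    and dyn: "AE t in lebesgue_on {0..T}. gs t = f1 (ys t) (us t) t \<and> f2 (ys t) (us t) t = 0"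
    using feasible unfolding ocp_feasible_def by blast
  note err = approximant_error_bounds[OF T X mesh Xh dist]
  have "0 \<le> ?D * \<delta>" using err(3) T by (meson atLeastAtMost_iff less_imp_le norm_ge_zero order_trans order_refl)
  then have D\<delta>: "?D * \<delta> \<le> \<rho>" using \<rho>(1) by linarith
  have holder: "Clam * x powr lam \<le> ?K" if "0 \<le> x" "x \<le> \<rho>" for x
    using that lam Clam by (intro mult_left_mono powr_mono2) auto
  define \<Delta> where "\<Delta> = norm (ys 0 - yh 0, ys T - yh T)"
  have "\<Delta> \<le> norm (ys 0 - yh 0) + norm (ys T - yh T)" unfolding \<Delta>_def by (rule norm_Pair_le)
  also have "\<dots> \<le> ?D * \<delta> + ?D * \<delta>" using err(3) T by (intro add_mono) auto
  finally have "\<Delta> \<le> \<rho>" using \<rho>(1) by linarith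
  then have "\<bar>M (ys 0) (ys T) - M (yh 0) (yh T)\<bar> \<le> ?K \<and> norm (b (yh 0) (yh T)) \<le> ?K"
    using boundary[rule_format, of "yh 0" "yh T"] holder[of \<Delta>] \<rho>(2) b0
    unfolding \<Delta>_def by (auto simp: norm_minus_commute)
  then show "M (yh 0) (yh T) \<le> M (ys 0) (ys T) + ?K" by linarith
  have b_le: "(norm (b (yh 0) (yh T)))\<^sup>2 \<le> ?K\<^sup>2"
    using \<open>\<bar>_\<bar> \<le> ?K \<and> _\<close> by (intro power_mono) auto
  have "AE t in lebesgue_on {0..T}. t \<in> {0..T}" using AE_space[of "lebesgue_on {0..T}"] by simp
  with err(2) have "AE t in lebesgue_on {0..T}.
      norm (f1 (ys t) (us t) t - f1 (yh t) (uh t) t, f2 (ys t) (us t) t - f2 (yh t) (uh t) t) \<le> ?K"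
  proof eventually_elim
    case (elim t)
    then show ?case
      using dynamics[rule_format, of t "yh t" "uh t"] holder[of "norm (ys t - yh t, us t - uh t)"] D\<delta> \<rho>(2)
      by auto
  qed
  moreover obtain gh where "is_wderiv T yh gh" using in_Xhp_has_wderiv[OF mesh Xh] .
  ultimately have "integral {0..T} (\<lambda>t. (norm (fres f1 f2 (wderiv T yh t) (yh t) (uh t) t))\<^sup>2)
      \<le> 2 * T * ?K\<^sup>2 + 2 * integral {0..T} (\<lambda>t. (norm (wderiv T (\<lambda>t. ys t - yh t) t))\<^sup>2)"
    using residual_integral_le[where ?f1.0 = f1 and ?f2.0 = f2 and ys = ys and us = us, OF T gs dyn] by blast
  then have "integral {0..T} (\<lambda>t. (norm (fres f1 f2 (wderiv T yh t) (yh t) (uh t) t))\<^sup>2)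
      \<le> 2 * T * ?K\<^sup>2 + 2 * \<delta>\<^sup>2"
    using err(1) by linarith
  then show "rsq T f1 f2 b yh uh \<le> (2 * T + 1) * ?K\<^sup>2 + 2 * \<delta>\<^sup>2"
    using b_le unfolding rsq_def by (simp add: algebra_simps)
qed

section \<open>The penalty estimate\<close>

lemma mult_powr_le_if_le_powr_inverse:
  fixes h R \<epsilon> \<eta> :: real
  assumes "0 < R" "0 < \<epsilon>" "0 < \<eta>" "0 \<le> h" "h \<le> (\<epsilon> / R) powr (1 / \<eta>)"
  shows "R * h powr \<eta> \<le> \<epsilon>"
proof -
  have "h powr \<eta> \<le> ((\<epsilon> / R) powr (1 / \<eta>)) powr \<eta>"
    using assms by (intro powr_mono2) auto
  also have "\<dots> = \<epsilon> / R" using assms by (simp add: powr_powr)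
  finally show ?thesis using assms(1) by (simp add: field_simps)
qed

lemma penalty_objective_eq_Jh:
  "M (y 0) (y T) + rsq T f1 f2 b y u / (2 * \<omega>)
     = Jh T N tm q qt qa \<omega> M b f1 f2 y u
       + (integral {0..T} (\<lambda>t. (norm (fres f1 f2 (wderiv T y t) (y t) (u t) t))\<^sup>2)
          - Qh N tm q qt qa f1 f2 y u) / (2 * \<omega>)"
  unfolding Jh_def rsq_def by (simp add: add_divide_distrib diff_divide_distrib)

lemma penalty_objective_le_if_Jh_le:
  assumes \<omega>: "0 < \<omega>"
    and J: "Jh T N tm q qt qa \<omega> M b f1 f2 y u \<le> Jh T N tm q qt qa \<omega> M b f1 f2 y' u'"
    and Q: "\<bar>integral {0..T} (\<lambda>t. (norm (fres f1 f2 (wderiv T y t) (y t) (u t) t))\<^sup>2)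
              - Qh N tm q qt qa f1 f2 y u\<bar> \<le> E"
    and Q': "\<bar>integral {0..T} (\<lambda>t. (norm (fres f1 f2 (wderiv T y' t) (y' t) (u' t) t))\<^sup>2)
              - Qh N tm q qt qa f1 f2 y' u'\<bar> \<le> E"
  shows "M (y 0) (y T) + rsq T f1 f2 b y u / (2 * \<omega>)
           \<le> M (y' 0) (y' T) + (rsq T f1 f2 b y' u' + 2 * E) / (2 * \<omega>)"
proof -
  have err: "- (E / (2 * \<omega>)) \<le> x / (2 * \<omega>) \<and> x / (2 * \<omega>) \<le> E / (2 * \<omega>)" if "\<bar>x\<bar> \<le> E" for x
    using that \<omega> divide_right_mono[of x E "2 * \<omega>"] divide_right_mono[of "- E" x "2 * \<omega>"] by auto
  have split: "(rsq T f1 f2 b y' u' + 2 * E) / (2 * \<omega>)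
      = rsq T f1 f2 b y' u' / (2 * \<omega>) + E / (2 * \<omega>) + E / (2 * \<omega>)"
    by (simp add: add_divide_distrib)
  show ?thesis
    unfolding split
    using penalty_objective_eq_Jh[of M y T f1 f2 b u \<omega> N tm q qt qa]
      penalty_objective_eq_Jh[of M y' T f1 f2 b u' \<omega> N tm q qt qa] J err[OF Q] err[OF Q']
    by linarith
qed

lemma approximant_penalty_rate:
  fixes M :: "real ^ 'ny \<Rightarrow> real ^ 'ny \<Rightarrow> real"
    and b :: "real ^ 'ny \<Rightarrow> real ^ 'ny \<Rightarrow> real ^ 'nb"
    and f1 :: "real ^ 'ny \<Rightarrow> real ^ 'nu \<Rightarrow> real \<Rightarrow> real ^ 'ny"
    and f2 :: "real ^ 'ny \<Rightarrow> real ^ 'nu \<Rightarrow> real \<Rightarrow> real ^ 'nc"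
    and ys yh :: "real \<Rightarrow> real ^ 'ny" and us uh :: "real \<Rightarrow> real ^ 'nu"
    and Clam C\<eta> lam :: real
  defines "K \<equiv> Clam * (2 * sqrt DIM((real ^ 'ny) \<times> (real ^ 'nu)) * C\<eta>) powr lam"
  assumes T: "0 < T" and feasible: "ocp_feasible T b f1 f2 yL yR uL uR ys us"
    and mesh: "is_mesh T N tm" and Xh: "in_Xhp T N tm p yh uh"
    and h: "0 < h" "h \<le> 1" and \<eta>: "0 < \<eta>" and C\<eta>: "0 \<le> C\<eta>"
    and dist: "Xdist T ys us yh uh \<le> C\<eta> * h powr \<eta>"
    and small: "2 * sqrt DIM((real ^ 'ny) \<times> (real ^ 'nu)) * C\<eta> * h powr \<eta> \<le> \<epsilon>"
    and lam: "0 < lam" "lam \<le> 1" and Clam: "0 \<le> Clam"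
    and boundary: "\<forall>a a'. norm (ys 0 - a, ys T - a') \<le> \<epsilon> \<longrightarrow>
          \<bar>M (ys 0) (ys T) - M a a'\<bar> \<le> Clam * norm (ys 0 - a, ys T - a') powr lam \<and>
          norm (b (ys 0) (ys T) - b a a') \<le> Clam * norm (ys 0 - a, ys T - a') powr lam"
    and dynamics: "\<forall>t\<in>{0..T}. \<forall>v w. norm (ys t - v, us t - w) \<le> \<epsilon> \<longrightarrow>
          norm (f1 (ys t) (us t) t - f1 v w t, f2 (ys t) (us t) t - f2 v w t)
            \<le> Clam * norm (ys t - v, us t - w) powr lam"
  shows "M (yh 0) (yh T) \<le> M (ys 0) (ys T) + K * h powr (\<eta> * lam)"
    and "rsq T f1 f2 b yh uh \<le> ((2 * T + 1) * K\<^sup>2 + 2 * C\<eta>\<^sup>2) * h powr (2 * \<eta> * lam)"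
proof -
  define a where "a = h powr (\<eta> * lam)"
  define a2 where "a2 = h powr (2 * \<eta> * lam)"
  have "2 * \<eta> * lam = \<eta> * lam + \<eta> * lam" by simp
  then have "a\<^sup>2 = a2" unfolding a_def a2_def by (simp only: power2_eq_square powr_add)
  have "Clam * (2 * sqrt DIM((real ^ 'ny) \<times> (real ^ 'nu)) * C\<eta> * h powr \<eta>) powr lam = K * a"
    unfolding K_def a_def using C\<eta> h by (simp add: powr_mult powr_powr)
  then have Mh: "M (yh 0) (yh T) \<le> M (ys 0) (ys T) + K * a"
    and rsqh: "rsq T f1 f2 b yh uh \<le> (2 * T + 1) * (K * a)\<^sup>2 + 2 * (C\<eta> * h powr \<eta>)\<^sup>2"
    using approximant_penalty_bounds[OF T feasible mesh Xh dist _ small lam(1) Clam boundary dynamics]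
    by (simp_all add: mult.assoc)
  show "M (yh 0) (yh T) \<le> M (ys 0) (ys T) + K * h powr (\<eta> * lam)" using Mh unfolding a_def .
  have "h powr (2 * \<eta>) = h powr \<eta> * h powr \<eta>" by (simp add: powr_add[symmetric])
  then have "(C\<eta> * h powr \<eta>)\<^sup>2 = C\<eta>\<^sup>2 * h powr (2 * \<eta>)"
    by (simp add: power_mult_distrib power2_eq_square)
  also have "\<dots> \<le> C\<eta>\<^sup>2 * a2"
    unfolding a2_def using h \<eta> lam by (intro mult_left_mono powr_mono') auto
  finally show "rsq T f1 f2 b yh uh \<le> ((2 * T + 1) * K\<^sup>2 + 2 * C\<eta>\<^sup>2) * h powr (2 * \<eta> * lam)"
    using rsqh \<open>a\<^sup>2 = a2\<close> unfolding a2_def[symmetric] by (simp add: power_mult_distrib algebra_simps)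
qed

lemma penalty_rate_collect:
  fixes x M0 Mh r K P Cell a a2 hl \<omega> :: real
  assumes x: "x \<le> Mh + (r + 2 * (Cell * hl)) / (2 * \<omega>)"
    and Mh: "Mh \<le> M0 + K * a" and r: "r \<le> P * a2"
    and \<omega>: "0 < \<omega>" and nonneg: "0 \<le> K" "0 \<le> P" "0 \<le> Cell" "0 \<le> a" "0 \<le> a2" "0 \<le> hl"
  shows "x \<le> M0 + (K + P + Cell) * (a + (a2 + hl) / \<omega>)"
proof -
  define C where "C = K + P + Cell"
  have "K * a \<le> C * a" "P * a2 \<le> C * a2" "Cell * hl \<le> C * hl" "0 \<le> C * a2"
    using nonneg unfolding C_def by (simp_all add: mult_right_mono)
  then have "r + 2 * (Cell * hl) \<le> 2 * (C * (a2 + hl))"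
    using r unfolding distrib_left by linarith
  then have "(r + 2 * (Cell * hl)) / (2 * \<omega>) \<le> C * (a2 + hl) / \<omega>"
    using divide_right_mono[of _ _ "2 * \<omega>"] \<omega> by fastforce
  moreover have "C * (a + (a2 + hl) / \<omega>) = C * a + C * (a2 + hl) / \<omega>"
    by (simp add: distrib_left)
  ultimately show ?thesis
    using x Mh \<open>K * a \<le> C * a\<close> unfolding C_def[symmetric] by linarith
qed

theorem mainTheorem7:
  fixes T :: real
    and M :: "real ^ 'ny \<Rightarrow> real ^ 'ny \<Rightarrow> real"
    and b :: "real ^ 'ny \<Rightarrow> real ^ 'ny \<Rightarrow> real ^ 'nb"
    and f1 :: "real ^ 'ny \<Rightarrow> real ^ 'nu \<Rightarrow> real \<Rightarrow> real ^ 'ny"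
    and f2 :: "real ^ 'ny \<Rightarrow> real ^ 'nu \<Rightarrow> real \<Rightarrow> real ^ 'nc"
    and yL yR ystar :: "real \<Rightarrow> real ^ 'ny"
    and uL uR ustar :: "real \<Rightarrow> real ^ 'nu"
    and p m q :: nat
    and N :: "'k \<Rightarrow> nat" and tm :: "'k \<Rightarrow> nat \<Rightarrow> real"
    and qt qa :: "'k \<Rightarrow> nat \<Rightarrow> nat \<Rightarrow> real"
    and yhat :: "'k \<Rightarrow> real \<Rightarrow> real ^ 'ny" and uhat :: "'k \<Rightarrow> real \<Rightarrow> real ^ 'nu"
    and h0 \<eta> C\<eta> hq ell Cell lam Clam \<epsilon> :: real
  assumes T_pos: "0 < T"
    and p_pos: "1 \<le> p" and m_pos: "1 \<le> m"
    and bounds_ord: "\<forall>t\<in>{0..T}. yL t \<le> yR t \<and> uL t \<le> uR t"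
    and meshes: "\<forall>k. is_mesh T (N k) (tm k)"
    and quad: "\<forall>k i j. i < N k \<longrightarrow> j < q \<longrightarrow>
                  0 < qa k i j \<and> qt k i j \<in> {tm k i..tm k (Suc i)}"
    and local_min: "ocp_local_min T M b f1 f2 yL yR uL uR ystar ustar"
    and bounds_disc: "\<forall>k. in_Xhp T (N k) (tm k) p yL uL \<and> in_Xhp T (N k) (tm k) p yR uR"
    and approx: "0 < h0" "0 < \<eta>" "0 < C\<eta>"
      "\<forall>k. mesh_size (N k) (tm k) \<le> h0 \<longrightarrow>
          in_Bhp T (N k) (tm k) p m yL yR uL uR (yhat k) (uhat k) \<and>
          Xdist T ystar ustar (yhat k) (uhat k) \<le> C\<eta> * mesh_size (N k) (tm k) powr \<eta>"
    and quad_order: "0 < hq" "0 < ell" "0 < Cell"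
      "\<forall>k. mesh_size (N k) (tm k) \<le> hq \<longrightarrow>
          (\<forall>y u. in_Xhp T (N k) (tm k) p y u \<longrightarrow>
             \<bar>integral {0..T} (\<lambda>t. (norm (fres f1 f2 (wderiv T y t) (y t) (u t) t))\<^sup>2)
               - Qh (N k) (tm k) q (qt k) (qa k) f1 f2 y u\<bar>
             \<le> Cell * mesh_size (N k) (tm k) powr ell)"
    and A3: "0 < lam" "lam \<le> 1" "0 < Clam" "0 < \<epsilon>"
      "\<forall>a a'. norm (ystar 0 - a, ystar T - a') \<le> \<epsilon> \<longrightarrow>
          \<bar>M (ystar 0) (ystar T) - M a a'\<bar> \<le> Clam * norm (ystar 0 - a, ystar T - a') powr lam \<and>
          norm (b (ystar 0) (ystar T) - b a a') \<le> Clam * norm (ystar 0 - a, ystar T - a') powr lam"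
      "\<forall>t\<in>{0..T}. \<forall>v w. norm (ystar t - v, ustar t - w) \<le> \<epsilon> \<longrightarrow>
          norm (f1 (ystar t) (ustar t) t - f1 v w t, f2 (ystar t) (ustar t) t - f2 v w t)
            \<le> Clam * norm (ystar t - v, ustar t - w) powr lam"
  shows "\<exists>C\<chi> > 0. \<exists>h1 > 0. \<forall>k \<omega> y u.
           0 < \<omega> \<longrightarrow> mesh_size (N k) (tm k) \<le> h1 \<longrightarrow>
           Ph_local_min T (N k) (tm k) p m q (qt k) (qa k) \<omega> M b f1 f2 yL yR uL uR y u \<longrightarrow>
           Jh T (N k) (tm k) q (qt k) (qa k) \<omega> M b f1 f2 y u
             \<le> Jh T (N k) (tm k) q (qt k) (qa k) \<omega> M b f1 f2 (yhat k) (uhat k) \<longrightarrow>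
           M (y 0) (y T) + rsq T f1 f2 b y u / (2 * \<omega>)
             \<le> M (ystar 0) (ystar T)
                + C\<chi> * (mesh_size (N k) (tm k) powr (\<eta> * lam)
                         + (mesh_size (N k) (tm k) powr (2 * \<eta> * lam)
                            + mesh_size (N k) (tm k) powr ell) / \<omega>)"
proof -
  \<comment> \<open>Only feasibility of (ystar, ustar) and the comparison of Jh with (yhat k, uhat k) are
    used; neither local minimality nor the discrete bound constraints play a role.\<close>
  have feasible: "ocp_feasible T b f1 f2 yL yR uL uR ystar ustar"
    using local_min unfolding ocp_local_min_def by blast
  define R where "R = 2 * sqrt DIM((real ^ 'ny) \<times> (real ^ 'nu)) * C\<eta>"
  define K where "K = Clam * R powr lam"
  define P where "P = (2 * T + 1) * K\<^sup>2 + 2 * C\<eta>\<^sup>2"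
  define C\<chi> where "C\<chi> = K + P + Cell"
  define h1 where "h1 = min (min h0 hq) (min 1 ((\<epsilon> / R) powr (1 / \<eta>)))"
  have "0 < R" unfolding R_def using approx(3) by (simp add: add_pos_pos)
  have "0 \<le> K" "0 \<le> P" unfolding K_def P_def using A3(3) T_pos by simp_all
  then have "0 < C\<chi>" unfolding C\<chi>_def using quad_order(3) by simp
  moreover have "0 < h1" unfolding h1_def using approx(1) quad_order(1) A3(4) \<open>0 < R\<close> by simp
  moreover have "M (y 0) (y T) + rsq T f1 f2 b y u / (2 * \<omega>)
      \<le> M (ystar 0) (ystar T)
         + C\<chi> * (mesh_size (N k) (tm k) powr (\<eta> * lam)
                  + (mesh_size (N k) (tm k) powr (2 * \<eta> * lam) + mesh_size (N k) (tm k) powr ell) / \<omega>)"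
    if \<omega>: "0 < \<omega>" and h1: "mesh_size (N k) (tm k) \<le> h1"
      and min: "Ph_local_min T (N k) (tm k) p m q (qt k) (qa k) \<omega> M b f1 f2 yL yR uL uR y u"
      and J: "Jh T (N k) (tm k) q (qt k) (qa k) \<omega> M b f1 f2 y u
                \<le> Jh T (N k) (tm k) q (qt k) (qa k) \<omega> M b f1 f2 (yhat k) (uhat k)"
    for k \<omega> y u
  proof -
    let ?h = "mesh_size (N k) (tm k)"
    have mesh: "is_mesh T (N k) (tm k)" using meshes by blast
    have h: "0 < ?h" "?h \<le> h0" "?h \<le> hq" "?h \<le> 1"
      using mesh_size_pos[OF mesh] h1 unfolding h1_def by auto
    have "R * ?h powr \<eta> \<le> \<epsilon>"
      using h1 h(1) approx(2) A3(4) \<open>0 < R\<close> unfolding h1_def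
      by (intro mult_powr_le_if_le_powr_inverse) auto
    then have small: "2 * sqrt DIM((real ^ 'ny) \<times> (real ^ 'nu)) * C\<eta> * ?h powr \<eta> \<le> \<epsilon>"
      unfolding R_def .
    have Xy: "in_Xhp T (N k) (tm k) p y u" using min unfolding Ph_local_min_def in_Bhp_def by blast
    have Xh: "in_Xhp T (N k) (tm k) p (yhat k) (uhat k)"
      and dist: "Xdist T ystar ustar (yhat k) (uhat k) \<le> C\<eta> * ?h powr \<eta>"
      using approx(4) h(2) unfolding in_Bhp_def by blast+
    note approximant = approximant_penalty_rate[OF T_pos feasible mesh Xh h(1,4) approx(2) _ dist small
        A3(1,2) _ A3(5,6), folded R_def, folded K_def, folded P_def]
    have "M (y 0) (y T) + rsq T f1 f2 b y u / (2 * \<omega>)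
        \<le> M (yhat k 0) (yhat k T) + (rsq T f1 f2 b (yhat k) (uhat k) + 2 * (Cell * ?h powr ell)) / (2 * \<omega>)"
      using penalty_objective_le_if_Jh_le[OF \<omega> J] quad_order(4) h(3) Xy Xh by blast
    then show ?thesis
      unfolding C\<chi>_def using approximant approx(3) A3(3) \<omega> \<open>0 \<le> K\<close> \<open>0 \<le> P\<close> quad_order(3)
      by (intro penalty_rate_collect) auto
  qed
  ultimately show ?thesis by blast
qed

end
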